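(* Let $\mathcal{H}$ be a separable Hilbert space, $\{\mathcal{H}_j\}_{j\in J}$ ($J\subseteq\mathbb{Z}$) a sequence of closed subspaces of $\mathcal{H}$, and $K\in\mathcal{B}(\mathcal{H})$ with closed range $\mathcal{R}(K)$. Let $\{\Lambda_j\}_{j\in J}$ and $\{\Theta_j\}_{j\in J}$ be $g$-Bessel sequences with $\Lambda_j,\Theta_j\in\mathcal{B}(\mathcal{H},\mathcal{H}_j)$, and let $U:\mathcal{R}(K)\to\mathcal{R}(K)$, $Uf=\sum_{j\in J}\Lambda_j^{\ast}\Theta_jf$, satisfy $\|I_{\mathcal{R}(K)}-U\|<1$ (i.e. $\{\Theta_j\}$ is an approximate $K$-$g$-dual of $\{\Lambda_j\}$). Then for every $N\in\mathbb{N}$ the sequence $\{\gamma_j^{(N)}\}_{j\in J}$, $\gamma_j^{(N)}=\sum_{n=0}^{N}\Theta_j(I_{\mathcal{R}(K)}-U)^n:\mathcal{R}(K)\to\mathcal{H}_j$, is an approximate $K$-$g$-dual of $\{\Lambda_j\}_{j\in J}$, i.e. it is a $g$-Bessel sequence on $\mathcal{R}(K)$ and $\|I_{\mathcal{R}(K)}-V_N\|<1$, where $V_Nf=\sum_{j\in J}\Lambda_j^{\ast}\gamma_j^{(N)}f$ for $f\in\mathcal{R}(K)$.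
   Context: A sequence $\{\Lambda_j\in\mathcal{B}(\mathcal{H},\mathcal{H}_j)\}_{j\in J}$ is $g$-Bessel if there is $B>0$ with $\sum_{j\in J}\|\Lambda_jf\|^2\leq B\|f\|^2$ for all $f$ in its domain; $T_\Lambda:\{g_j\}\mapsto\sum_j\Lambda_j^\ast g_j$ denotes its synthesis operator, so $U=T_\Lambda T_\Theta^\ast$ restricted to $\mathcal{R}(K)$. Two $g$-Bessel sequences are approximately dual $K$-$g$-frames if $\|I_{\mathcal{R}(K)}-T_\Lambda T_\Theta^\ast\|<1$, where $T_\Lambda T_\Theta^\ast$ is regarded as an operator on $\mathcal{R}(K)$. *)

theory Defs
  imports "HOL-Analysis.Analysis"
begin

definition g_bessel_on :: "'a::real_normed_vector set \<Rightarrow> ('i \<Rightarrow> 'a \<Rightarrow> 'b::real_normed_vector) \<Rightarrow> 'i set \<Rightarrow> bool" where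
  "g_bessel_on S Lam J \<longleftrightarrow>
     (\<exists>B>0. \<forall>f\<in>S. (\<lambda>j. (norm (Lam j f))\<^sup>2) summable_on J \<and>
                    (\<Sum>\<^sub>\<infinity>j\<in>J. (norm (Lam j f))\<^sup>2) \<le> B * (norm f)\<^sup>2)"

definition opnorm_on :: "'a::real_normed_vector set \<Rightarrow> ('a \<Rightarrow> 'b::real_normed_vector) \<Rightarrow> real" where
  "opnorm_on S T = Inf {c. 0 \<le> c \<and> (\<forall>f\<in>S. norm (T f) \<le> c * norm f)}"

definition mixed_op :: "('i \<Rightarrow> 'b \<Rightarrow> 'a::{real_normed_vector}) \<Rightarrow> ('i \<Rightarrow> 'a \<Rightarrow> 'b) \<Rightarrow> 'i set \<Rightarrow> 'a \<Rightarrow> 'a" where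
  "mixed_op LamAdj Gam J f = (\<Sum>\<^sub>\<infinity>j\<in>J. LamAdj j (Gam j f))"

end

theory Submission
  imports Defs
begin

text \<open>Put W = I - U. By hypothesis W is a contraction on R(K) with some constant c < 1.
  Since U W^n = W^n - W^(n+1), the operator V_N = \<Sum>_{n \<le> N} U W^n telescopes to I - W^(N+1),
  so ||I - V_N|| \<le> c^(N+1) < 1; and \<gamma>_j = \<Theta>_j \<circ> \<Sum>_{n \<le> N} W^n is g-Bessel because
  ||\<Sum>_{n \<le> N} W^n|| \<le> N + 1 on R(K). The analytic input is that the synthesis series
  \<Sum>_j \<Lambda>_j^* g_j of a g-Bessel sequence with bound B converges unconditionally for every
  square-summable (g_j), with norm at most sqrt B (\<Sum>_j ||g_j||^2)^(1/2): on finite sets this is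
  Cauchy-Schwarz, and the tails of \<Sum>_j ||g_j||^2 then give the Cauchy criterion.\<close>

lemma summable_on_Cauchy:
  fixes f :: "'i \<Rightarrow> 'a::{real_normed_vector, complete_space}"
  assumes tail: "\<And>e. e > 0 \<Longrightarrow>
      \<exists>F0. finite F0 \<and> F0 \<subseteq> A \<and> (\<forall>F. finite F \<and> F \<subseteq> A - F0 \<longrightarrow> norm (sum f F) < e)"
  shows "f summable_on A"
proof -
  have "\<exists>P. eventually P (finite_subsets_at_top A) \<and>
          (\<forall>F1 F2. P F1 \<and> P F2 \<longrightarrow> dist (sum f F1) (sum f F2) < e)" if "e > 0" for e
  proof -
    obtain F0 where F0: "finite F0" "F0 \<subseteq> A"
      and small: "\<And>F. finite F \<Longrightarrow> F \<subseteq> A - F0 \<Longrightarrow> norm (sum f F) < e / 2"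
      using tail[of "e / 2"] \<open>e > 0\<close> by auto
    define P where "P F \<longleftrightarrow> finite F \<and> F0 \<subseteq> F \<and> F \<subseteq> A" for F
    have "eventually P (finite_subsets_at_top A)"
      unfolding eventually_finite_subsets_at_top P_def using F0 by blast
    moreover have "dist (sum f F1) (sum f F2) < e" if "P F1" "P F2" for F1 F2
    proof -
      have split: "sum f F = sum f F0 + sum f (F - F0)" if "P F" for F
        using that unfolding P_def by (metis add.commute sum.subset_diff)
      have "dist (sum f F1) (sum f F2) = norm (sum f (F1 - F0) - sum f (F2 - F0))"
        using split[OF \<open>P F1\<close>] split[OF \<open>P F2\<close>] by (simp add: dist_norm)
      also have "\<dots> \<le> norm (sum f (F1 - F0)) + norm (sum f (F2 - F0))"
        by (rule norm_triangle_ineq4)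
      also have "\<dots> < e / 2 + e / 2"
        using that unfolding P_def by (intro add_strict_mono small) auto
      finally show ?thesis by simp
    qed
    ultimately show ?thesis by blast
  qed
  then have "convergent_filter (filtermap (sum f) (finite_subsets_at_top A))"
    by (simp add: cauchy_filter_metric_filtermap cauchy_filter_convergent)
  then show ?thesis
    by (auto simp: convergent_filter_iff summable_on_def has_sum_def filterlim_def)
qed

lemma has_sum_sum:
  fixes f :: "'n \<Rightarrow> 'i \<Rightarrow> 'a::real_normed_vector"
  assumes "finite I" "\<And>n. n \<in> I \<Longrightarrow> (f n has_sum s n) A"
  shows "((\<lambda>x. \<Sum>n\<in>I. f n x) has_sum (\<Sum>n\<in>I. s n)) A"
  using assms by (induction I rule: finite_induct) (auto intro: has_sum_add)

lemma adjoint_on_sum: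
  fixes L :: "'a::real_inner \<Rightarrow> 'b::real_inner" and A :: "'b \<Rightarrow> 'a"
  assumes "subspace H" and adj: "\<And>x y. y \<in> H \<Longrightarrow> inner (L x) y = inner x (A y)"
    and "finite I" "\<And>n. n \<in> I \<Longrightarrow> y n \<in> H"
  shows "A (\<Sum>n\<in>I. y n) = (\<Sum>n\<in>I. A (y n))"
proof -
  have "(\<Sum>n\<in>I. y n) \<in> H" using assms by (simp add: subspace_sum)
  then have "inner x (A (\<Sum>n\<in>I. y n)) = inner x (\<Sum>n\<in>I. A (y n))" for x
    using assms by (simp add: adj[symmetric] inner_sum_right)
  then show ?thesis by (metis vector_eq_ldot)
qed

definition g_bessel_bound ::
    "'a::real_normed_vector set \<Rightarrow> ('i \<Rightarrow> 'a \<Rightarrow> 'b::real_normed_vector) \<Rightarrow> 'i set \<Rightarrow> real \<Rightarrow> bool" where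
  "g_bessel_bound S Lam J B \<longleftrightarrow>
     (\<forall>f\<in>S. (\<lambda>j. (norm (Lam j f))\<^sup>2) summable_on J \<and>
            (\<Sum>\<^sub>\<infinity>j\<in>J. (norm (Lam j f))\<^sup>2) \<le> B * (norm f)\<^sup>2)"

lemma g_bessel_on_iff_bound: "g_bessel_on S Lam J \<longleftrightarrow> (\<exists>B>0. g_bessel_bound S Lam J B)"
  by (simp add: g_bessel_on_def g_bessel_bound_def)

lemma g_bessel_bound_comp:
  assumes Theta: "g_bessel_bound UNIV Theta J B" and "0 \<le> B"
    and A_le: "\<And>f. f \<in> S \<Longrightarrow> norm (A f) \<le> C * norm f"
    and Gam: "\<And>j f. j \<in> J \<Longrightarrow> f \<in> S \<Longrightarrow> Gam j f = Theta j (A f)"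
  shows "g_bessel_bound S Gam J (B * C\<^sup>2)"
  unfolding g_bessel_bound_def
proof (intro ballI conjI)
  fix f assume f: "f \<in> S"
  show "(\<lambda>j. (norm (Gam j f))\<^sup>2) summable_on J"
    using Theta Gam f by (auto simp: g_bessel_bound_def cong: summable_on_cong)
  have "(\<Sum>\<^sub>\<infinity>j\<in>J. (norm (Gam j f))\<^sup>2) = (\<Sum>\<^sub>\<infinity>j\<in>J. (norm (Theta j (A f)))\<^sup>2)"
    using Gam f by (intro infsum_cong) simp
  also have "\<dots> \<le> B * (norm (A f))\<^sup>2"
    using Theta by (simp add: g_bessel_bound_def)
  also have "\<dots> \<le> B * (C * norm f)\<^sup>2"
    using A_le[OF f] \<open>0 \<le> B\<close> by (intro mult_left_mono power_mono) auto
  finally show "(\<Sum>\<^sub>\<infinity>j\<in>J. (norm (Gam j f))\<^sup>2) \<le> B * C\<^sup>2 * (norm f)\<^sup>2"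
    by (simp add: power_mult_distrib mult.assoc)
qed

lemma norm_sum_adjoint_le:
  fixes Lam :: "'i \<Rightarrow> 'a::real_inner \<Rightarrow> 'b::real_inner" and Lamadj :: "'i \<Rightarrow> 'b \<Rightarrow> 'a"
  assumes bessel: "g_bessel_bound UNIV Lam J B" and "0 \<le> B"
    and adj: "\<And>j x y. j \<in> J \<Longrightarrow> y \<in> Hs j \<Longrightarrow> inner (Lam j x) y = inner x (Lamadj j y)"
    and F: "finite F" "F \<subseteq> J" and g: "\<And>j. j \<in> F \<Longrightarrow> g j \<in> Hs j"
  shows "norm (\<Sum>j\<in>F. Lamadj j (g j)) \<le> sqrt B * sqrt (\<Sum>j\<in>F. (norm (g j))\<^sup>2)"
proof -
  define s where "s = (\<Sum>j\<in>F. Lamadj j (g j))"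
  have "(norm s)\<^sup>2 = (\<Sum>j\<in>F. inner (Lam j s) (g j))"
  proof -
    have "(norm s)\<^sup>2 = (\<Sum>j\<in>F. inner s (Lamadj j (g j)))"
      by (simp add: power2_norm_eq_inner inner_sum_right s_def)
    also have "\<dots> = (\<Sum>j\<in>F. inner (Lam j s) (g j))"
      using adj g F by (intro sum.cong) auto
    finally show ?thesis .
  qed
  also have "\<dots> \<le> (\<Sum>j\<in>F. \<bar>norm (Lam j s)\<bar> * \<bar>norm (g j)\<bar>)"
    by (intro sum_mono) (simp add: norm_cauchy_schwarz)
  also have "\<dots> \<le> sqrt (\<Sum>j\<in>F. (norm (Lam j s))\<^sup>2) * sqrt (\<Sum>j\<in>F. (norm (g j))\<^sup>2)"
    using L2_set_mult_ineq unfolding L2_set_def .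
  also have "\<dots> \<le> sqrt B * norm s * sqrt (\<Sum>j\<in>F. (norm (g j))\<^sup>2)"
  proof (intro mult_right_mono)
    have "(\<Sum>j\<in>F. (norm (Lam j s))\<^sup>2) \<le> (\<Sum>\<^sub>\<infinity>j\<in>J. (norm (Lam j s))\<^sup>2)"
      using bessel F by (intro finite_sum_le_infsum) (auto simp: g_bessel_bound_def)
    also have "\<dots> \<le> B * (norm s)\<^sup>2"
      using bessel by (simp add: g_bessel_bound_def)
    finally show "sqrt (\<Sum>j\<in>F. (norm (Lam j s))\<^sup>2) \<le> sqrt B * norm s"
      by (metis real_sqrt_le_mono real_sqrt_mult real_sqrt_abs abs_norm_cancel)
  qed (simp add: sum_nonneg)
  finally have "norm s * norm s \<le> norm s * (sqrt B * sqrt (\<Sum>j\<in>F. (norm (g j))\<^sup>2))"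
    by (simp add: power2_eq_square mult_ac)
  then show ?thesis
    unfolding s_def[symmetric] using \<open>0 \<le> B\<close>
    by (cases "norm s = 0") (auto simp: sum_nonneg)
qed

lemma summable_on_adjoint_synthesis:
  fixes Lam :: "'i \<Rightarrow> 'a::{real_inner, complete_space} \<Rightarrow> 'b::real_inner"
    and Lamadj :: "'i \<Rightarrow> 'b \<Rightarrow> 'a"
  assumes bessel: "g_bessel_bound UNIV Lam J B" and "0 \<le> B"
    and adj: "\<And>j x y. j \<in> J \<Longrightarrow> y \<in> Hs j \<Longrightarrow> inner (Lam j x) y = inner x (Lamadj j y)"
    and g: "\<And>j. j \<in> J \<Longrightarrow> g j \<in> Hs j" and g_sq: "(\<lambda>j. (norm (g j))\<^sup>2) summable_on J"
  shows "(\<lambda>j. Lamadj j (g j)) summable_on J"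
proof (rule summable_on_Cauchy)
  fix e :: real assume "e > 0"
  let ?G = "\<lambda>j. (norm (g j))\<^sup>2"
  define d where "d = e\<^sup>2 / (B + 1)"
  have "d > 0" using \<open>e > 0\<close> \<open>0 \<le> B\<close> by (simp add: d_def)
  moreover have "(?G has_sum infsum ?G J) J" using g_sq by simp
  ultimately have "\<exists>F0. finite F0 \<and> F0 \<subseteq> J \<and> dist (sum ?G F0) (infsum ?G J) \<le> d"
    by (intro has_sum_finite_approximation)
  then obtain F0 where F0: "finite F0" "F0 \<subseteq> J" and close: "dist (sum ?G F0) (infsum ?G J) \<le> d"
    by blast
  have "norm (\<Sum>j\<in>F. Lamadj j (g j)) < e" if F: "finite F" "F \<subseteq> J - F0" for F
  proof -
    have "sum ?G F + sum ?G F0 = sum ?G (F \<union> F0)"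
      using F F0 by (subst sum.union_disjoint) auto
    also have "\<dots> \<le> infsum ?G J"
      using g_sq F F0 by (intro finite_sum_le_infsum) auto
    finally have "sum ?G F \<le> d" using close by (simp add: dist_real_def)
    then have "B * sum ?G F \<le> B * d" using \<open>0 \<le> B\<close> by (rule mult_left_mono)
    also have "B * d < e\<^sup>2" using \<open>e > 0\<close> \<open>0 \<le> B\<close> by (simp add: d_def field_simps)
    finally have "sqrt (B * sum ?G F) < sqrt (e\<^sup>2)" by (rule real_sqrt_less_mono)
    then have "sqrt B * sqrt (sum ?G F) < e" using \<open>e > 0\<close> by (simp add: real_sqrt_mult)
    moreover have "norm (\<Sum>j\<in>F. Lamadj j (g j)) \<le> sqrt B * sqrt (sum ?G F)"
      using F g by (intro norm_sum_adjoint_le[OF bessel \<open>0 \<le> B\<close> adj]) auto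
    ultimately show ?thesis by linarith
  qed
  then show "\<exists>F0. finite F0 \<and> F0 \<subseteq> J \<and>
      (\<forall>F. finite F \<and> F \<subseteq> J - F0 \<longrightarrow> norm (\<Sum>j\<in>F. Lamadj j (g j)) < e)"
    using F0 by blast
qed

lemma norm_infsum_adjoint_synthesis_le:
  fixes Lam :: "'i \<Rightarrow> 'a::{real_inner, complete_space} \<Rightarrow> 'b::real_inner"
    and Lamadj :: "'i \<Rightarrow> 'b \<Rightarrow> 'a"
  assumes bessel: "g_bessel_bound UNIV Lam J B" and "0 \<le> B"
    and adj: "\<And>j x y. j \<in> J \<Longrightarrow> y \<in> Hs j \<Longrightarrow> inner (Lam j x) y = inner x (Lamadj j y)"
    and g: "\<And>j. j \<in> J \<Longrightarrow> g j \<in> Hs j" and g_sq: "(\<lambda>j. (norm (g j))\<^sup>2) summable_on J"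
  shows "norm (\<Sum>\<^sub>\<infinity>j\<in>J. Lamadj j (g j)) \<le> sqrt B * sqrt (\<Sum>\<^sub>\<infinity>j\<in>J. (norm (g j))\<^sup>2)"
proof (rule Lim_norm_ubound)
  show "(sum (\<lambda>j. Lamadj j (g j)) \<longlongrightarrow> (\<Sum>\<^sub>\<infinity>j\<in>J. Lamadj j (g j))) (finite_subsets_at_top J)"
    by (rule infsum_tendsto, rule summable_on_adjoint_synthesis[OF assms])
  show "\<forall>\<^sub>F F in finite_subsets_at_top J.
      norm (\<Sum>j\<in>F. Lamadj j (g j)) \<le> sqrt B * sqrt (\<Sum>\<^sub>\<infinity>j\<in>J. (norm (g j))\<^sup>2)"
  proof (rule eventually_finite_subsets_at_top_weakI)
    fix F assume F: "finite F" "F \<subseteq> J"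
    have "norm (\<Sum>j\<in>F. Lamadj j (g j)) \<le> sqrt B * sqrt (\<Sum>j\<in>F. (norm (g j))\<^sup>2)"
      using F g by (intro norm_sum_adjoint_le[OF bessel \<open>0 \<le> B\<close> adj]) auto
    also have "\<dots> \<le> sqrt B * sqrt (\<Sum>\<^sub>\<infinity>j\<in>J. (norm (g j))\<^sup>2)"
      using F g_sq \<open>0 \<le> B\<close> by (intro mult_left_mono real_sqrt_le_mono finite_sum_le_infsum) auto
    finally show "norm (\<Sum>j\<in>F. Lamadj j (g j)) \<le> sqrt B * sqrt (\<Sum>\<^sub>\<infinity>j\<in>J. (norm (g j))\<^sup>2)" .
  qed
qed simp

lemma norm_mixed_op_le:
  fixes Lam :: "'i \<Rightarrow> 'a::{real_inner, complete_space} \<Rightarrow> 'b::real_inner"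
    and Lamadj :: "'i \<Rightarrow> 'b \<Rightarrow> 'a"
  assumes Lam: "g_bessel_bound UNIV Lam J BL" "0 \<le> BL"
    and adj: "\<And>j x y. j \<in> J \<Longrightarrow> y \<in> Hs j \<Longrightarrow> inner (Lam j x) y = inner x (Lamadj j y)"
    and Gam: "g_bessel_bound S Gam J BG" and Gam_Hs: "\<And>j x. j \<in> J \<Longrightarrow> Gam j x \<in> Hs j"
    and "f \<in> S"
  shows "norm (mixed_op Lamadj Gam J f) \<le> sqrt BL * sqrt BG * norm f"
proof -
  have Gam_f: "(\<lambda>j. (norm (Gam j f))\<^sup>2) summable_on J" "(\<Sum>\<^sub>\<infinity>j\<in>J. (norm (Gam j f))\<^sup>2) \<le> BG * (norm f)\<^sup>2"
    using Gam \<open>f \<in> S\<close> by (auto simp: g_bessel_bound_def)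
  have "norm (mixed_op Lamadj Gam J f) \<le> sqrt BL * sqrt (\<Sum>\<^sub>\<infinity>j\<in>J. (norm (Gam j f))\<^sup>2)"
    unfolding mixed_op_def using Gam_Hs Gam_f(1) by (intro norm_infsum_adjoint_synthesis_le[OF Lam adj])
  also have "\<dots> \<le> sqrt BL * sqrt (BG * (norm f)\<^sup>2)"
    using Gam_f(2) \<open>0 \<le> BL\<close> by (intro mult_left_mono real_sqrt_le_mono) auto
  finally show ?thesis by (simp add: real_sqrt_mult mult.assoc)
qed

lemma mixed_op_sum:
  fixes Lam :: "'i \<Rightarrow> 'a::real_inner \<Rightarrow> 'b::real_inner" and Lamadj :: "'i \<Rightarrow> 'b \<Rightarrow> 'a"
  assumes adj: "\<And>j x y. j \<in> J \<Longrightarrow> y \<in> Hs j \<Longrightarrow> inner (Lam j x) y = inner x (Lamadj j y)"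
    and Hs: "\<And>j. j \<in> J \<Longrightarrow> subspace (Hs j)" and Gam_Hs: "\<And>j x. j \<in> J \<Longrightarrow> Gam j x \<in> Hs j"
    and summable: "\<And>x. (\<lambda>j. Lamadj j (Gam j x)) summable_on J"
    and "finite I"
  shows "mixed_op Lamadj (\<lambda>j f. \<Sum>n\<in>I. Gam j (T n f)) J f = (\<Sum>n\<in>I. mixed_op Lamadj Gam J (T n f))"
proof -
  have "mixed_op Lamadj (\<lambda>j f. \<Sum>n\<in>I. Gam j (T n f)) J f = (\<Sum>\<^sub>\<infinity>j\<in>J. \<Sum>n\<in>I. Lamadj j (Gam j (T n f)))"
    unfolding mixed_op_def
  proof (rule infsum_cong)
    fix j assume "j \<in> J"
    show "Lamadj j (\<Sum>n\<in>I. Gam j (T n f)) = (\<Sum>n\<in>I. Lamadj j (Gam j (T n f)))"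
      by (rule adjoint_on_sum[OF Hs adj]) (use \<open>j \<in> J\<close> Gam_Hs \<open>finite I\<close> in auto)
  qed
  also have "\<dots> = (\<Sum>n\<in>I. mixed_op Lamadj Gam J (T n f))"
    unfolding mixed_op_def by (intro infsumI has_sum_sum \<open>finite I\<close>) (simp add: summable)
  finally show ?thesis .
qed

lemma opnorm_on_le:
  assumes "0 \<le> c" "\<And>f. f \<in> S \<Longrightarrow> norm (T f) \<le> c * norm f"
  shows "opnorm_on S T \<le> c"
  unfolding opnorm_on_def by (rule cInf_lower) (use assms in \<open>auto intro: bdd_belowI[of _ 0]\<close>)

lemma opnorm_on_lessE:
  assumes "opnorm_on S T < r"
    and "0 \<le> C" "\<And>f. f \<in> S \<Longrightarrow> norm (T f) \<le> C * norm f"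
  obtains c where "0 \<le> c" "c < r" "\<And>f. f \<in> S \<Longrightarrow> norm (T f) \<le> c * norm f"
proof -
  \<comment> \<open>the bound \<open>C\<close> is needed since \<open>Inf {}\<close> is an unspecified real\<close>
  let ?bounds = "{c. 0 \<le> c \<and> (\<forall>f\<in>S. norm (T f) \<le> c * norm f)}"
  have "?bounds \<noteq> {}" using assms(2,3) by blast
  from cInf_lessD[OF this] obtain c where "c \<in> ?bounds" "c < r"
    using assms(1) unfolding opnorm_on_def by blast
  then show thesis using that by blast
qed

lemma norm_funpow_le:
  assumes "\<And>f. f \<in> S \<Longrightarrow> T f \<in> S" "\<And>f. f \<in> S \<Longrightarrow> norm (T f) \<le> c * norm f" "0 \<le> c"
    and "f \<in> S"
  shows "norm ((T ^^ n) f) \<le> c ^ n * norm f"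
proof -
  have "(T ^^ n) f \<in> S \<and> norm ((T ^^ n) f) \<le> c ^ n * norm f"
  proof (induction n)
    case (Suc n)
    then have "norm ((T ^^ Suc n) f) \<le> c * (c ^ n * norm f)"
      using assms(2)[of "(T ^^ n) f"] \<open>0 \<le> c\<close> by (auto intro: order.trans mult_left_mono)
    with Suc assms(1) show ?case by (simp add: mult.assoc)
  qed (simp add: \<open>f \<in> S\<close>)
  then show ?thesis ..
qed

lemma sum_funpow_telescope:
  fixes U :: "'a \<Rightarrow> 'a::ab_group_add"
  shows "(\<Sum>n\<le>N. U (((\<lambda>x. x - U x) ^^ n) f)) = f - ((\<lambda>x. x - U x) ^^ Suc N) f"
proof -
  let ?W = "\<lambda>x. x - U x"
  have "(\<Sum>n\<le>N. U ((?W ^^ n) f)) = (\<Sum>n\<le>N. (?W ^^ n) f - (?W ^^ Suc n) f)"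
    by simp
  also have "\<dots> = f - (?W ^^ Suc N) f"
    by (subst sum_telescope) simp
  finally show ?thesis .
qed

lemma approximate_dual_contraction:
  fixes Lam Theta :: "'i \<Rightarrow> 'a::{real_inner, complete_space} \<Rightarrow> 'b::real_inner"
    and Lamadj :: "'i \<Rightarrow> 'b \<Rightarrow> 'a"
  assumes Lam: "g_bessel_bound UNIV Lam J BL" "0 \<le> BL"
    and adj: "\<And>j x y. j \<in> J \<Longrightarrow> y \<in> Hs j \<Longrightarrow> inner (Lam j x) y = inner x (Lamadj j y)"
    and Theta: "g_bessel_bound UNIV Theta J BT" "0 \<le> BT"
    and Theta_Hs: "\<And>j x. j \<in> J \<Longrightarrow> Theta j x \<in> Hs j"
    and approx: "opnorm_on S (\<lambda>f. f - mixed_op Lamadj Theta J f) < 1"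
  obtains c where "0 \<le> c" "c < 1"
    "\<And>f. f \<in> S \<Longrightarrow> norm (f - mixed_op Lamadj Theta J f) \<le> c * norm f"
proof (rule opnorm_on_lessE[OF approx])
  show "norm (f - mixed_op Lamadj Theta J f) \<le> (1 + sqrt BL * sqrt BT) * norm f" for f
  proof -
    have "norm (f - mixed_op Lamadj Theta J f) \<le> norm f + norm (mixed_op Lamadj Theta J f)"
      by (rule norm_triangle_ineq4)
    also have "\<dots> \<le> norm f + sqrt BL * sqrt BT * norm f"
      using norm_mixed_op_le[OF Lam adj Theta(1) Theta_Hs] by simp
    finally show ?thesis by (simp add: algebra_simps)
  qed
qed (use \<open>0 \<le> BL\<close> \<open>0 \<le> BT\<close> in auto)

lemma g_bessel_bound_sum_funpow:
  fixes Theta :: "'i \<Rightarrow> 'a::real_normed_vector \<Rightarrow> 'b::real_normed_vector"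
  assumes Theta: "g_bessel_bound UNIV Theta J B" "0 \<le> B"
    and lin: "\<And>j. j \<in> J \<Longrightarrow> linear (Theta j)"
    and W_S: "\<And>f. f \<in> S \<Longrightarrow> W f \<in> S" and W_le: "\<And>f. f \<in> S \<Longrightarrow> norm (W f) \<le> norm f"
  shows "g_bessel_bound S (\<lambda>j f. \<Sum>n\<le>N. Theta j ((W ^^ n) f)) J (B * (real N + 1)\<^sup>2)"
proof (rule g_bessel_bound_comp[OF Theta])
  fix f assume f: "f \<in> S"
  have "norm ((W ^^ n) f) \<le> norm f" for n
    using norm_funpow_le[of S W 1 f n] W_S W_le f by simp
  then have "norm (\<Sum>n\<le>N. (W ^^ n) f) \<le> (\<Sum>n\<le>N. norm f)"
    by (intro order.trans[OF norm_sum] sum_mono)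
  then show "norm (\<Sum>n\<le>N. (W ^^ n) f) \<le> (real N + 1) * norm f"
    by (simp add: add.commute)
  show "(\<Sum>n\<le>N. Theta j ((W ^^ n) f)) = Theta j (\<Sum>n\<le>N. (W ^^ n) f)" if "j \<in> J" for j
    using lin[OF that] by (simp add: linear_sum)
qed

lemma diff_mixed_op_sum_funpow:
  fixes Lam Theta :: "'i \<Rightarrow> 'a::real_inner \<Rightarrow> 'b::real_inner" and Lamadj :: "'i \<Rightarrow> 'b \<Rightarrow> 'a"
  assumes adj: "\<And>j x y. j \<in> J \<Longrightarrow> y \<in> Hs j \<Longrightarrow> inner (Lam j x) y = inner x (Lamadj j y)"
    and Hs: "\<And>j. j \<in> J \<Longrightarrow> subspace (Hs j)" and Theta_Hs: "\<And>j x. j \<in> J \<Longrightarrow> Theta j x \<in> Hs j"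
    and summable: "\<And>x. (\<lambda>j. Lamadj j (Theta j x)) summable_on J"
  defines "W \<equiv> \<lambda>g. g - mixed_op Lamadj Theta J g"
  shows "f - mixed_op Lamadj (\<lambda>j f. \<Sum>n\<le>N. Theta j ((W ^^ n) f)) J f = (W ^^ Suc N) f"
proof -
  have "mixed_op Lamadj (\<lambda>j f. \<Sum>n\<le>N. Theta j ((W ^^ n) f)) J f =
      (\<Sum>n\<le>N. mixed_op Lamadj Theta J ((W ^^ n) f))"
    by (intro mixed_op_sum[OF adj Hs Theta_Hs summable]) auto
  also have "\<dots> = f - (W ^^ Suc N) f"
    unfolding W_def by (rule sum_funpow_telescope)
  finally show ?thesis by simp
qed

theorem mainTheorem6:
  fixes K :: "'a::{real_inner, complete_space} \<Rightarrow> 'a"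
    and Hs :: "int \<Rightarrow> 'a set"
    and J :: "int set"
    and Lam Lamadj Theta :: "int \<Rightarrow> 'a \<Rightarrow> 'a"
    and N :: nat
  assumes sep: "separable_space (euclidean :: 'a topology)"
    and Hs_sub: "\<And>j. j \<in> J \<Longrightarrow> subspace (Hs j) \<and> closed (Hs j)"
    and K_bl: "bounded_linear K"
    and K_closed: "closed (range K)"
    and Lam_bl: "\<And>j. j \<in> J \<Longrightarrow> bounded_linear (Lam j) \<and> range (Lam j) \<subseteq> Hs j"
    and Theta_bl: "\<And>j. j \<in> J \<Longrightarrow> bounded_linear (Theta j) \<and> range (Theta j) \<subseteq> Hs j"
    and Lam_adj: "\<And>j x y. j \<in> J \<Longrightarrow> y \<in> Hs j \<Longrightarrow> inner (Lam j x) y = inner x (Lamadj j y)"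
    and Lam_bessel: "g_bessel_on UNIV Lam J"
    and Theta_bessel: "g_bessel_on UNIV Theta J"
    and U_maps: "\<forall>f\<in>range K. mixed_op Lamadj Theta J f \<in> range K"
    and approx: "opnorm_on (range K) (\<lambda>f. f - mixed_op Lamadj Theta J f) < 1"
  defines "gam \<equiv> (\<lambda>j f. \<Sum>n\<le>N. Theta j (((\<lambda>g. g - mixed_op Lamadj Theta J g) ^^ n) f))"
  shows "g_bessel_on (range K) gam J \<and>
         opnorm_on (range K) (\<lambda>f. f - mixed_op Lamadj gam J f) < 1"
proof -
  define W where "W = (\<lambda>g. g - mixed_op Lamadj Theta J g)"
  obtain BL BT where BL: "0 < BL" "g_bessel_bound UNIV Lam J BL"
    and BT: "0 < BT" "g_bessel_bound UNIV Theta J BT"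
    using Lam_bessel Theta_bessel by (auto simp: g_bessel_on_iff_bound)
  have Hs_subspace: "\<And>j. j \<in> J \<Longrightarrow> subspace (Hs j)"
    and Theta_Hs: "\<And>j x. j \<in> J \<Longrightarrow> Theta j x \<in> Hs j"
    using Hs_sub Theta_bl by blast+
  obtain c where c: "0 \<le> c" "c < 1" and W_le: "\<And>f. f \<in> range K \<Longrightarrow> norm (W f) \<le> c * norm f"
    using approximate_dual_contraction[OF BL(2) less_imp_le[OF BL(1)] Lam_adj
        BT(2) less_imp_le[OF BT(1)] Theta_Hs approx]
    unfolding W_def by blast
  have "subspace (range K)"
    using K_bl by (simp add: bounded_linear.linear linear_subspace_image subspace_UNIV)
  then have W_K: "\<And>f. f \<in> range K \<Longrightarrow> W f \<in> range K"
    unfolding W_def using U_maps by (intro subspace_diff) auto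
  have "g_bessel_bound (range K) gam J (BT * (real N + 1)\<^sup>2)"
  proof (unfold gam_def W_def[symmetric], rule g_bessel_bound_sum_funpow[OF BT(2)])
    show "norm (W f) \<le> norm f" if "f \<in> range K" for f
      using W_le[OF that] mult_left_le_one_le[of "norm f" c] c by simp
  qed (use BT Theta_bl W_K in \<open>auto simp: bounded_linear.linear\<close>)
  then have "g_bessel_on (range K) gam J"
    unfolding g_bessel_on_iff_bound using BT(1) by (intro exI[of _ "BT * (real N + 1)\<^sup>2"]) simp
  moreover have "opnorm_on (range K) (\<lambda>f. f - mixed_op Lamadj gam J f) \<le> c ^ Suc N"
  proof (rule opnorm_on_le)
    have U_summable: "(\<lambda>j. Lamadj j (Theta j x)) summable_on J" for x
      using BL BT Theta_Hs
      by (intro summable_on_adjoint_synthesis[OF BL(2) _ Lam_adj]) (auto simp: g_bessel_bound_def)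
    have V_eq: "f - mixed_op Lamadj gam J f = (W ^^ Suc N) f" for f
      unfolding gam_def W_def by (rule diff_mixed_op_sum_funpow[OF Lam_adj Hs_subspace Theta_Hs U_summable])
    show "norm (f - mixed_op Lamadj gam J f) \<le> c ^ Suc N * norm f" if "f \<in> range K" for f
      unfolding V_eq using W_K W_le c(1) that by (rule norm_funpow_le)
  qed (use c in simp)
  moreover have "c ^ Suc N < 1"
    using c by (simp add: power_less_one_iff del: power_Suc)
  ultimately show ?thesis by simp
qed

end
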